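(* Let $B\in\mathbb R^{n\times m}$, $f:\mathbb R^m\to\mathbb R$, $h:\mathbb R^n\to\mathbb R$ differentiable, and $T_{\mathcal U},\mathcal I_{\mathcal V}$ ($m\times m$), $T_{\mathcal P},\mathcal I_{\mathcal Q}$ ($n\times n$) symmetric positive definite. Let $f_B(u)=f(u)+\frac12(B^\top T_{\mathcal P}^{-1}Bu,u)$, $h_B(p)=h(p)+\frac12(BT_{\mathcal U}^{-1}B^\top p,p)$, $e_{\mathcal U}(u)=u-T_{\mathcal U}^{-1}\nabla f(u)$, $e_{\mathcal P}(p)=p-T_{\mathcal P}^{-1}\nabla h(p)$, and $$\mathcal G^u(u,p)=-\mathcal I_{\mathcal V}^{-1}\big(\nabla f_B(u)+B^\top(p-T_{\mathcal P}^{-1}\nabla h(p))\big),\qquad \mathcal G^p(u,p)=-\mathcal I_{\mathcal Q}^{-1}\big(\nabla h_B(p)-B(u-T_{\mathcal U}^{-1}\nabla f(u))\big).$$ Assume $\nabla f_B$ and $\nabla h_B$ are Lipschitz with constants $L_{f_B,\mathcal I_{\mathcal V}}$, $L_{h_B,\mathcal I_{\mathcal Q}}$ (i.e. $\|\nabla f_B(u_1)-\nabla f_B(u_2)\|_{\mathcal I_{\mathcal V}^{-1}}\le L_{f_B,\mathcal I_{\mathcal V}}\|u_1-u_2\|_{\mathcal I_{\mathcal V}}$ and $\|\nabla h_B(p_1)-\nabla h_B(p_2)\|_{\mathcal I_{\mathcal Q}^{-1}}\le L_{h_B,\mathcal I_{\mathcal Q}}\|p_1-p_2\|_{\mathcal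 I_{\mathcal Q}}$), and let $L_{e_{\mathcal U},\mathcal I_{\mathcal V}}$, $L_{e_{\mathcal P},\mathcal I_{\mathcal Q}}$ be the Lipschitz constants of $e_{\mathcal U}$ in $\|\cdot\|_{\mathcal I_{\mathcal V}}$ and of $e_{\mathcal P}$ in $\|\cdot\|_{\mathcal I_{\mathcal Q}}$. Then for all $u_1,u_2\in\mathbb R^m$, $p_1,p_2\in\mathbb R^n$, $$\|\mathcal G^u(u_1,p_1)-\mathcal G^u(u_2,p_2)\|_{\mathcal I_{\mathcal V}}\le L_{f_B,\mathcal I_{\mathcal V}}\|u_1-u_2\|_{\mathcal I_{\mathcal V}}+L_SL_{e_{\mathcal P},\mathcal I_{\mathcal Q}}\|p_1-p_2\|_{\mathcal I_{\mathcal Q}},$$ $$\|\mathcal G^p(u_1,p_1)-\mathcal G^p(u_2,p_2)\|_{\mathcal I_{\mathcal Q}}\le L_{h_B,\mathcal I_{\mathcal Q}}\|p_1-p_2\|_{\mathcal I_{\mathcal Q}}+L_SL_{e_{\mathcal U},\mathcal I_{\mathcal V}}\|u_1-u_2\|_{\mathcal I_{\mathcal V}},$$ where $L_S^2=\lambda_{\max}(\mathcal I_{\mathcal Q}^{-1}B\mathcal I_{\mathcal V}^{-1}B^\top)$.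
   Context: For SPD $M$, $\|x\|_M=(Mx,x)^{1/2}$. *)

theory Defs
  imports "HOL-Analysis.Analysis"
begin

definition spd :: "real^'k^'k \<Rightarrow> bool" where
  "spd M \<longleftrightarrow> transpose M = M \<and> (\<forall>x. x \<noteq> 0 \<longrightarrow> 0 < (M *v x) \<bullet> x)"

definition mnorm :: "real^'k^'k \<Rightarrow> real^'k \<Rightarrow> real" where
  "mnorm M x = sqrt ((M *v x) \<bullet> x)"

definition real_eigenvalues :: "real^'k^'k \<Rightarrow> real set" where
  "real_eigenvalues M = {c. \<exists>v. v \<noteq> 0 \<and> M *v v = c *s v}"

definition lambda_max :: "real^'k^'k \<Rightarrow> real" where
  "lambda_max M = Max (real_eigenvalues M)"

end

theory Submission
  imports Defs
begin

text \<open>Both estimates follow from the triangle inequality once \<open>B\<^sup>T\<close> is known to map the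
  \<open>IQ\<close>-norm into the \<open>IV\<^sup>-\<^sup>1\<close>-norm with constant \<open>LS\<close>; by duality of the \<open>M\<close>- and
  \<open>M\<^sup>-\<^sup>1\<close>-norms, \<open>B\<close> then maps the \<open>IV\<close>-norm into the \<open>IQ\<^sup>-\<^sup>1\<close>-norm with the same constant.
  The bound for \<open>B\<^sup>T\<close> is \<open>(K y, y) \<le> LS\<^sup>2 (IQ y, y)\<close> with \<open>K = B IV\<^sup>-\<^sup>1 B\<^sup>T\<close>. The generalized
  Rayleigh quotient \<open>(K y, y) / (IQ y, y)\<close> attains its maximum on the unit sphere, and a
  first-variation argument shows that the maximiser is an eigenvector of \<open>IQ\<^sup>-\<^sup>1 K\<close>, so the maximum
  is an eigenvalue; there are only finitely many, since eigenvectors for distinct eigenvalues are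
  \<open>IQ\<close>-orthogonal.\<close>

lemma inner_transpose_matrix_vector:
  fixes A :: "real^'n^'m"
  shows "(transpose A *v y) \<bullet> x = y \<bullet> (A *v x)"
  by (simp add: dot_lmul_matrix)

lemma symmetric_matrix_iff_inner_swap:
  fixes M :: "real^'k^'k"
  shows "transpose M = M \<longleftrightarrow> (\<forall>x y. (M *v x) \<bullet> y = x \<bullet> (M *v y))"
proof
  assume "transpose M = M"
  then show "\<forall>x y. (M *v x) \<bullet> y = x \<bullet> (M *v y)"
    by (metis inner_transpose_matrix_vector)
next
  assume swap: "\<forall>x y. (M *v x) \<bullet> y = x \<bullet> (M *v y)"
  have "transpose M *v x = M *v x" for x
    using swap inner_transpose_matrix_vector by (metis inner_commute vector_eq_ldot)
  then show "transpose M = M"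
    by (simp add: matrix_eq)
qed

lemma spd_symmetric: "spd M \<Longrightarrow> transpose M = M"
  by (simp add: spd_def)

lemma spd_pos: "spd M \<Longrightarrow> x \<noteq> 0 \<Longrightarrow> 0 < (M *v x) \<bullet> x"
  by (simp add: spd_def)

lemma spd_nonneg: "spd M \<Longrightarrow> 0 \<le> (M *v x) \<bullet> x"
  by (cases "x = 0") (auto simp: spd_def less_imp_le)

lemma spd_inner_swap: "spd M \<Longrightarrow> (M *v x) \<bullet> y = x \<bullet> (M *v y)"
  by (simp add: spd_def symmetric_matrix_iff_inner_swap)

lemma spd_invertible:
  assumes "spd M" shows "invertible M"
proof -
  have "\<forall>x. M *v x = 0 \<longrightarrow> x = 0"
    using spd_pos[OF assms] by force
  then show ?thesis
    by (simp add: invertible_left_inverse matrix_left_invertible_ker)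
qed

lemma invertible_matrix_inv_cancel:
  fixes M :: "'a::field^'k^'k"
  assumes "invertible M"
  shows "M *v (matrix_inv M *v x) = x" "matrix_inv M *v (M *v x) = x"
proof -
  have "M ** matrix_inv M = mat 1 \<and> matrix_inv M ** M = mat 1"
    using assms unfolding invertible_def matrix_inv_def by (rule someI_ex)
  then show "M *v (matrix_inv M *v x) = x" "matrix_inv M *v (M *v x) = x"
    by (simp_all add: matrix_vector_mul_assoc)
qed

lemma spd_matrix_inv:
  assumes "spd M" shows "spd (matrix_inv M)"
proof -
  note cancel = invertible_matrix_inv_cancel[OF spd_invertible[OF assms]]
  have "(matrix_inv M *v x) \<bullet> y = x \<bullet> (matrix_inv M *v y)" for x y
    by (metis cancel(1) spd_inner_swap[OF assms])
  moreover have "0 < (matrix_inv M *v x) \<bullet> x" if "x \<noteq> 0" for x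
    using spd_pos[OF assms, of "matrix_inv M *v x"] that
    by (metis cancel(1) inner_commute matrix_vector_mult_0_right)
  ultimately show ?thesis
    by (simp add: spd_def symmetric_matrix_iff_inner_swap)
qed

lemma quadratic_form_add_scaleR:
  fixes K :: "real^'k^'k"
  assumes "transpose K = K"
  shows "(K *v (x + t *\<^sub>R y)) \<bullet> (x + t *\<^sub>R y)
         = (K *v x) \<bullet> x + 2 * t * ((K *v x) \<bullet> y) + t\<^sup>2 * ((K *v y) \<bullet> y)"
proof -
  have swap: "(K *v y) \<bullet> x = (K *v x) \<bullet> y"
    using assms by (metis inner_commute symmetric_matrix_iff_inner_swap)
  show ?thesis
    unfolding matrix_vector_right_distrib matrix_vector_mult_scaleR inner_add_left inner_add_right
      inner_scaleR_left inner_scaleR_right swap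
    by (simp add: power2_eq_square algebra_simps)
qed

lemma mnorm_power2: "spd M \<Longrightarrow> (mnorm M x)\<^sup>2 = (M *v x) \<bullet> x"
  by (simp add: mnorm_def spd_nonneg)

lemma mnorm_nonneg: "spd M \<Longrightarrow> 0 \<le> mnorm M x"
  by (simp add: mnorm_def spd_nonneg)

lemma mnorm_uminus [simp]: "mnorm M (- x) = mnorm M x"
  by (simp add: mnorm_def matrix_vector_mult_diff_distrib[of M 0 x, simplified])

lemma mnorm_cauchy_schwarz:
  assumes "spd M"
  shows "(M *v x) \<bullet> y \<le> mnorm M x * mnorm M y"
proof (cases "y = 0")
  case True
  then show ?thesis by (simp add: mnorm_def)
next
  case False
  define a b c where "a = (M *v x) \<bullet> x" and "b = (M *v x) \<bullet> y" and "c = (M *v y) \<bullet> y"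
  have "c > 0" using spd_pos[OF assms False] by (simp add: c_def)
  have "0 \<le> (M *v (x + (- b / c) *\<^sub>R y)) \<bullet> (x + (- b / c) *\<^sub>R y)"
    by (rule spd_nonneg[OF assms])
  also have "\<dots> = a - b\<^sup>2 / c"
    using \<open>c > 0\<close> unfolding quadratic_form_add_scaleR[OF spd_symmetric[OF assms]]
    by (simp add: a_def b_def c_def power2_eq_square field_simps)
  finally have "b\<^sup>2 \<le> a * c" using \<open>c > 0\<close> by (simp add: field_simps)
  then have "b \<le> sqrt (a * c)" by (simp add: real_le_rsqrt)
  then show ?thesis by (simp add: mnorm_def a_def b_def c_def real_sqrt_mult)
qed

lemma mnorm_triangle:
  assumes "spd M"
  shows "mnorm M (x + y) \<le> mnorm M x + mnorm M y"
proof -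
  have "(mnorm M (x + y))\<^sup>2 = (mnorm M x)\<^sup>2 + 2 * ((M *v x) \<bullet> y) + (mnorm M y)\<^sup>2"
    using quadratic_form_add_scaleR[OF spd_symmetric[OF assms], of x 1 y]
    by (simp add: mnorm_power2[OF assms])
  also have "\<dots> \<le> (mnorm M x + mnorm M y)\<^sup>2"
    using mnorm_cauchy_schwarz[OF assms, of x y] by (simp add: power2_eq_square algebra_simps)
  finally show ?thesis
    using mnorm_nonneg[OF assms] by (meson add_nonneg_nonneg power2_le_imp_le)
qed

lemma mnorm_triangle_diff:
  assumes "spd M"
  shows "mnorm M (x - y) \<le> mnorm M x + mnorm M y"
  using mnorm_triangle[OF assms, of x "- y"] by simp

lemma mnorm_matrix_inv:
  assumes "spd M"
  shows "mnorm M (matrix_inv M *v x) = mnorm (matrix_inv M) x"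
  using invertible_matrix_inv_cancel[OF spd_invertible[OF assms]]
  by (simp add: mnorm_def inner_commute)

lemma inner_le_mnorm_mult_mnorm_matrix_inv:
  assumes "spd M"
  shows "x \<bullet> z \<le> mnorm M x * mnorm (matrix_inv M) z"
proof -
  have "x \<bullet> z = (M *v x) \<bullet> (matrix_inv M *v z)"
    by (metis assms invertible_matrix_inv_cancel(1) spd_inner_swap spd_invertible)
  also have "\<dots> \<le> mnorm M x * mnorm M (matrix_inv M *v z)"
    by (rule mnorm_cauchy_schwarz[OF assms])
  finally show ?thesis
    by (simp add: mnorm_matrix_inv[OF assms])
qed

lemma real_eigenvalues_matrix_inv_mult_iff:
  fixes P K :: "real^'k^'k"
  assumes "invertible P"
  shows "c \<in> real_eigenvalues (matrix_inv P ** K) \<longleftrightarrow> (\<exists>v. v \<noteq> 0 \<and> K *v v = c *\<^sub>R (P *v v))"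
proof -
  have "matrix_inv P *v (K *v v) = c *\<^sub>R v \<longleftrightarrow> K *v v = c *\<^sub>R (P *v v)" for v
    by (metis invertible_matrix_inv_cancel[OF assms] matrix_vector_mult_scaleR)
  then show ?thesis
    by (simp add: real_eigenvalues_def scalar_mult_eq_scaleR matrix_vector_mul_assoc[symmetric])
qed

lemma pairwise_spd_orthogonal_independent:
  fixes P :: "real^'k^'k"
  assumes "spd P" and orth: "pairwise (\<lambda>v w. (P *v v) \<bullet> w = 0) S" and "0 \<notin> S"
  shows "independent S"
proof -
  have False if "a \<in> S" and "a \<in> span (S - {a})" for a
  proof -
    obtain T U where T: "T \<subseteq> S - {a}" and a: "a = (\<Sum>v\<in>T. U v *\<^sub>R v)"
      using \<open>a \<in> span (S - {a})\<close> by (force simp: span_explicit)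
    have "(P *v a) \<bullet> a = (\<Sum>v\<in>T. U v * ((P *v a) \<bullet> v))"
      by (subst (2) a) (simp add: inner_sum_right)
    also have "\<dots> = 0"
    proof (intro sum.neutral ballI)
      fix v assume "v \<in> T"
      then have "v \<in> S" "v \<noteq> a"
        using T by auto
      then have "(P *v a) \<bullet> v = 0"
        using orth \<open>a \<in> S\<close> by (simp add: pairwise_def)
      then show "U v * ((P *v a) \<bullet> v) = 0" by simp
    qed
    finally show False
      using spd_pos[OF \<open>spd P\<close>, of a] \<open>0 \<notin> S\<close> \<open>a \<in> S\<close> by auto
  qed
  then show ?thesis
    by (force simp: dependent_def)
qed

lemma finite_real_eigenvalues_matrix_inv_mult:
  fixes P K :: "real^'k^'k"
  assumes "spd P" and "transpose K = K"
  shows "finite (real_eigenvalues (matrix_inv P ** K))"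
proof -
  let ?E = "real_eigenvalues (matrix_inv P ** K)"
  note eigen_iff = real_eigenvalues_matrix_inv_mult_iff[OF spd_invertible[OF \<open>spd P\<close>]]
  define ev where "ev c = (SOME v. v \<noteq> 0 \<and> K *v v = c *\<^sub>R (P *v v))" for c
  have ev: "ev c \<noteq> 0" "K *v ev c = c *\<^sub>R (P *v ev c)" if "c \<in> ?E" for c
    using someI_ex[OF that[unfolded eigen_iff]] by (simp_all add: ev_def)
  have orth: "(P *v ev c) \<bullet> ev d = 0" if "c \<in> ?E" "d \<in> ?E" "c \<noteq> d" for c d
  proof -
    have "c * ((P *v ev c) \<bullet> ev d) = (K *v ev c) \<bullet> ev d"
      using ev(2)[OF that(1)] by simp
    also have "\<dots> = d * ((P *v ev c) \<bullet> ev d)"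
      using ev(2)[OF that(2)] \<open>transpose K = K\<close> spd_inner_swap[OF \<open>spd P\<close>]
      by (simp add: symmetric_matrix_iff_inner_swap)
    finally show ?thesis
      using \<open>c \<noteq> d\<close> by simp
  qed
  have inj: "inj_on ev ?E"
    by (metis inj_onI ev(1) orth spd_pos[OF \<open>spd P\<close>] less_irrefl)
  have "independent (ev ` ?E)"
    using orth ev(1) inj
    by (intro pairwise_spd_orthogonal_independent[OF \<open>spd P\<close>]) (auto simp: pairwise_def inj_on_def)
  then show ?thesis
    using independent_imp_finite finite_imageD inj by blast
qed

lemma symmetric_nonpos_form_zero_imp_kernel:
  fixes K :: "real^'k^'k"
  assumes "transpose K = K" and nonpos: "\<And>y. (K *v y) \<bullet> y \<le> 0" and "(K *v y0) \<bullet> y0 = 0"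
  shows "K *v y0 = 0"
proof (rule ccontr)
  define g where "g = K *v y0"
  assume "K *v y0 \<noteq> 0"
  then have "0 < g \<bullet> g" by (simp add: g_def)
  have "(K *v (y0 + t *\<^sub>R g)) \<bullet> (y0 + t *\<^sub>R g) = t * (2 * (g \<bullet> g) + t * ((K *v g) \<bullet> g))" for t
    using quadratic_form_add_scaleR[OF assms(1), of y0 t g] assms(3) unfolding g_def[symmetric]
    by (simp add: power2_eq_square algebra_simps)
  then have step: "t * (2 * (g \<bullet> g) + t * ((K *v g) \<bullet> g)) \<le> 0" for t
    by (metis nonpos)
  \<comment> \<open>for this \<open>t\<close> the quadratic term is at least \<open>- (g \<bullet> g)\<close>, which leaves \<open>g \<bullet> g \<le> 0\<close>\<close>
  define t where "t = (g \<bullet> g) / (1 - (K *v g) \<bullet> g)"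
  have "0 < t" "- (g \<bullet> g) \<le> t * ((K *v g) \<bullet> g)"
    using \<open>0 < g \<bullet> g\<close> nonpos[of g] by (auto simp: t_def field_simps)
  then show False
    using step[of t] \<open>0 < g \<bullet> g\<close> by (simp add: mult_le_0_iff)
qed

lemma rayleigh_quotient_attains_max:
  fixes K P :: "real^'k^'k"
  assumes "spd P"
  obtains y0 c where "y0 \<noteq> 0" "(K *v y0) \<bullet> y0 = c * ((P *v y0) \<bullet> y0)"
    "\<And>y. (K *v y) \<bullet> y \<le> c * ((P *v y) \<bullet> y)"
proof -
  define R where "R y = ((K *v y) \<bullet> y) / ((P *v y) \<bullet> y)" for y
  have "\<forall>y\<in>sphere 0 1. (P *v y) \<bullet> y \<noteq> 0"
  proof
    fix y :: "real^'k" assume "y \<in> sphere 0 1"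
    then have "y \<noteq> 0" by auto
    then show "(P *v y) \<bullet> y \<noteq> 0" using spd_pos[OF assms] by force
  qed
  then have "continuous_on (sphere 0 1) R"
    unfolding R_def
    by (intro continuous_on_divide continuous_on_inner continuous_on_id
        bounded_linear.continuous_on[OF matrix_vector_mul_bounded_linear])
  then obtain y0 where y0: "y0 \<in> sphere 0 1" and max: "\<And>y. y \<in> sphere 0 1 \<Longrightarrow> R y \<le> R y0"
    using continuous_attains_sup[of "sphere 0 1" R] by auto
  have scale: "R (t *\<^sub>R y) = R y" if "t \<noteq> 0" for t y
    using that by (simp add: R_def matrix_vector_mult_scaleR power2_eq_square)
  have "(K *v y) \<bullet> y \<le> R y0 * ((P *v y) \<bullet> y)" for y
  proof (cases "y = 0")
    case False
    have "R y = R ((1 / norm y) *\<^sub>R y)" using False by (simp add: scale)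
    also have "\<dots> \<le> R y0" using False by (intro max) simp
    finally show ?thesis
      using spd_pos[OF assms False] by (simp add: R_def pos_divide_le_eq)
  qed simp
  moreover have "y0 \<noteq> 0"
    using y0 by auto
  moreover have "(K *v y0) \<bullet> y0 = R y0 * ((P *v y0) \<bullet> y0)"
    using spd_pos[OF assms \<open>y0 \<noteq> 0\<close>] by (simp add: R_def)
  ultimately show thesis using that by blast
qed

lemma rayleigh_max_in_real_eigenvalues:
  fixes K P :: "real^'k^'k"
  assumes "spd P" and "transpose K = K"
  obtains c where "c \<in> real_eigenvalues (matrix_inv P ** K)" "\<And>y. (K *v y) \<bullet> y \<le> c * ((P *v y) \<bullet> y)"
proof -
  obtain y0 c where "y0 \<noteq> 0" and at_y0: "(K *v y0) \<bullet> y0 = c * ((P *v y0) \<bullet> y0)"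
    and le: "\<And>y. (K *v y) \<bullet> y \<le> c * ((P *v y) \<bullet> y)"
    using rayleigh_quotient_attains_max[OF assms(1)] by blast
  have shifted: "(K - c *\<^sub>R P) *v y = K *v y - c *\<^sub>R (P *v y)" for y
    by (simp add: matrix_vector_mult_diff_rdistrib scaleR_matrix_vector_assoc)
  have "transpose (K - c *\<^sub>R P) = K - c *\<^sub>R P"
    using assms spd_inner_swap[OF assms(1)]
    by (simp add: symmetric_matrix_iff_inner_swap shifted inner_diff_left inner_diff_right)
  then have "(K - c *\<^sub>R P) *v y0 = 0"
    by (rule symmetric_nonpos_form_zero_imp_kernel) (use le at_y0 in \<open>simp_all add: shifted inner_diff_left\<close>)
  then have "c \<in> real_eigenvalues (matrix_inv P ** K)"
    using \<open>y0 \<noteq> 0\<close> real_eigenvalues_matrix_inv_mult_iff[OF spd_invertible[OF assms(1)]]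
    by (auto simp: shifted)
  then show thesis
    using that le by blast
qed

lemma quadratic_form_le_lambda_max:
  fixes K P :: "real^'k^'k"
  assumes "spd P" and "transpose K = K"
  shows "(K *v y) \<bullet> y \<le> lambda_max (matrix_inv P ** K) * ((P *v y) \<bullet> y)"
proof -
  obtain c where c: "c \<in> real_eigenvalues (matrix_inv P ** K)"
    and le: "(K *v y) \<bullet> y \<le> c * ((P *v y) \<bullet> y)"
    using rayleigh_max_in_real_eigenvalues[OF assms] by blast
  have "c \<le> lambda_max (matrix_inv P ** K)"
    unfolding lambda_max_def using finite_real_eigenvalues_matrix_inv_mult[OF assms] c by simp
  then show ?thesis
    using le spd_nonneg[OF assms(1), of y] by (meson mult_right_mono order_trans)
qed

lemma mnorm_transpose_mult_le:
  fixes B :: "real^'m^'n" and V :: "real^'m^'m" and Q :: "real^'n^'n"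
  assumes "spd V" and "spd Q"
  shows "mnorm (matrix_inv V) (transpose B *v y)
         \<le> sqrt (lambda_max (matrix_inv Q ** B ** matrix_inv V ** transpose B)) * mnorm Q y"
proof -
  define K where "K = B ** matrix_inv V ** transpose B"
  have "transpose K = K"
    using spd_symmetric[OF spd_matrix_inv[OF \<open>spd V\<close>]]
    by (simp add: K_def matrix_transpose_mul matrix_mul_assoc)
  have "(K *v y) \<bullet> y = (matrix_inv V *v (transpose B *v y)) \<bullet> (transpose B *v y)"
    using inner_transpose_matrix_vector[of "transpose B"]
    by (simp add: K_def matrix_vector_mul_assoc[symmetric] inner_commute)
  then have "mnorm (matrix_inv V) (transpose B *v y) = sqrt ((K *v y) \<bullet> y)"
    by (simp add: mnorm_def)
  also have "\<dots> \<le> sqrt (lambda_max (matrix_inv Q ** K) * ((Q *v y) \<bullet> y))"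
    using quadratic_form_le_lambda_max[OF \<open>spd Q\<close> \<open>transpose K = K\<close>] by simp
  also have "\<dots> = sqrt (lambda_max (matrix_inv Q ** B ** matrix_inv V ** transpose B)) * mnorm Q y"
    by (simp add: K_def mnorm_def real_sqrt_mult matrix_mul_assoc)
  finally show ?thesis .
qed

lemma mnorm_bound_nonneg:
  fixes f :: "real^'n \<Rightarrow> real^'m"
  assumes "spd M" and "spd Q" and bound: "\<And>y. mnorm M (f y) \<le> L * mnorm Q y"
  shows "0 \<le> L"
proof -
  have "0 < mnorm Q 1"
    using spd_pos[OF \<open>spd Q\<close>, of 1] by (simp add: mnorm_def)
  moreover have "0 \<le> L * mnorm Q 1"
    using mnorm_nonneg[OF \<open>spd M\<close>, of "f 1"] bound[of 1] by linarith
  ultimately show ?thesis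
    by (simp add: zero_le_mult_iff)
qed

lemma mnorm_mult_le_of_transpose:
  fixes B :: "real^'m^'n" and V :: "real^'m^'m" and Q :: "real^'n^'n"
  assumes "spd V" and "spd Q"
    and transpose_bound: "\<And>y. mnorm (matrix_inv V) (transpose B *v y) \<le> L * mnorm Q y"
  shows "mnorm (matrix_inv Q) (B *v x) \<le> L * mnorm V x"
proof -
  have "0 \<le> L"
    using mnorm_bound_nonneg[OF spd_matrix_inv[OF \<open>spd V\<close>] \<open>spd Q\<close> transpose_bound] .
  define y where "y = matrix_inv Q *v (B *v x)"
  define n where "n = mnorm (matrix_inv Q) (B *v x)"
  have "n\<^sup>2 = x \<bullet> (transpose B *v y)"
    using inner_transpose_matrix_vector[of B y x]
    by (simp add: n_def y_def mnorm_power2[OF spd_matrix_inv[OF \<open>spd Q\<close>]] inner_commute)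
  also have "\<dots> \<le> mnorm V x * mnorm (matrix_inv V) (transpose B *v y)"
    by (rule inner_le_mnorm_mult_mnorm_matrix_inv[OF \<open>spd V\<close>])
  also have "\<dots> \<le> mnorm V x * (L * n)"
    using transpose_bound[of y] mnorm_nonneg[OF \<open>spd V\<close>]
    by (simp add: y_def n_def mnorm_matrix_inv[OF \<open>spd Q\<close>] mult_left_mono)
  finally have "n * n \<le> n * (L * mnorm V x)"
    by (simp add: power2_eq_square algebra_simps)
  moreover have "0 \<le> L * mnorm V x"
    using \<open>0 \<le> L\<close> mnorm_nonneg[OF \<open>spd V\<close>] by simp
  ultimately show ?thesis
    unfolding n_def by (metis mult_le_cancel_left not_le order_trans less_imp_le)
qed

lemma mnorm_uminus_matrix_inv_diff:
  assumes "spd M"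
  shows "mnorm M (- (matrix_inv M *v a) - - (matrix_inv M *v b)) = mnorm (matrix_inv M) (a - b)"
proof -
  have "- (matrix_inv M *v a) - - (matrix_inv M *v b) = - (matrix_inv M *v (a - b))"
    by (simp add: matrix_vector_mult_diff_distrib)
  then show ?thesis
    by (simp only: mnorm_uminus mnorm_matrix_inv[OF assms])
qed

theorem lemma5p4:
  fixes B :: "real^'m^'n"
    and f :: "real^'m \<Rightarrow> real" and h :: "real^'n \<Rightarrow> real"
    and gf gfB :: "real^'m \<Rightarrow> real^'m" and gh ghB :: "real^'n \<Rightarrow> real^'n"
    and TU IV :: "real^'m^'m" and TP IQ :: "real^'n^'n"
    and LfB LhB LeU LeP LS :: real
  assumes spd: "spd TU" "spd IV" "spd TP" "spd IQ"
    and grad_f: "\<And>u. GDERIV f u :> gf u"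
    and grad_h: "\<And>p. GDERIV h p :> gh p"
    and grad_fB: "\<And>u. GDERIV (\<lambda>u. f u + 1/2 * (((transpose B ** matrix_inv TP ** B) *v u) \<bullet> u)) u :> gfB u"
    and grad_hB: "\<And>p. GDERIV (\<lambda>p. h p + 1/2 * (((B ** matrix_inv TU ** transpose B) *v p) \<bullet> p)) p :> ghB p"
    and lip_fB: "\<And>u1 u2. mnorm (matrix_inv IV) (gfB u1 - gfB u2) \<le> LfB * mnorm IV (u1 - u2)"
    and lip_hB: "\<And>p1 p2. mnorm (matrix_inv IQ) (ghB p1 - ghB p2) \<le> LhB * mnorm IQ (p1 - p2)"
    and lip_eU: "\<And>u1 u2. mnorm IV ((u1 - matrix_inv TU *v gf u1) - (u2 - matrix_inv TU *v gf u2))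
                   \<le> LeU * mnorm IV (u1 - u2)"
    and lip_eP: "\<And>p1 p2. mnorm IQ ((p1 - matrix_inv TP *v gh p1) - (p2 - matrix_inv TP *v gh p2))
                   \<le> LeP * mnorm IQ (p1 - p2)"
    and LS: "LS = sqrt (lambda_max (matrix_inv IQ ** B ** matrix_inv IV ** transpose B))"
  shows "\<forall>u1 u2 p1 p2.
     (let eU = (\<lambda>u. u - matrix_inv TU *v gf u);
          eP = (\<lambda>p. p - matrix_inv TP *v gh p);
          Gu = (\<lambda>u p. - (matrix_inv IV *v (gfB u + transpose B *v eP p)));
          Gp = (\<lambda>u p. - (matrix_inv IQ *v (ghB p - B *v eU u)))
      in mnorm IV (Gu u1 p1 - Gu u2 p2) \<le> LfB * mnorm IV (u1 - u2) + LS * LeP * mnorm IQ (p1 - p2)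
       \<and> mnorm IQ (Gp u1 p1 - Gp u2 p2) \<le> LhB * mnorm IQ (p1 - p2) + LS * LeU * mnorm IV (u1 - u2))"
proof -
  have IV_inv: "spd (matrix_inv IV)" and IQ_inv: "spd (matrix_inv IQ)"
    using spd spd_matrix_inv by auto
  have BT: "mnorm (matrix_inv IV) (transpose B *v y) \<le> LS * mnorm IQ y" for y
    unfolding LS by (rule mnorm_transpose_mult_le[OF spd(2,4)])
  have BB: "mnorm (matrix_inv IQ) (B *v x) \<le> LS * mnorm IV x" for x
    by (rule mnorm_mult_le_of_transpose[OF spd(2,4) BT])
  have "0 \<le> LS"
    by (rule mnorm_bound_nonneg[OF IV_inv spd(4) BT])
  define eU where "eU = (\<lambda>u. u - matrix_inv TU *v gf u)"
  define eP where "eP = (\<lambda>p. p - matrix_inv TP *v gh p)"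
  define Gu where "Gu = (\<lambda>u p. - (matrix_inv IV *v (gfB u + transpose B *v eP p)))"
  define Gp where "Gp = (\<lambda>u p. - (matrix_inv IQ *v (ghB p - B *v eU u)))"
  have Gu_le: "mnorm IV (Gu u1 p1 - Gu u2 p2) \<le> LfB * mnorm IV (u1 - u2) + LS * LeP * mnorm IQ (p1 - p2)"
    for u1 u2 p1 p2
  proof -
    have "mnorm IV (Gu u1 p1 - Gu u2 p2)
        = mnorm (matrix_inv IV) ((gfB u1 - gfB u2) + transpose B *v (eP p1 - eP p2))"
      unfolding Gu_def
      by (simp only: mnorm_uminus_matrix_inv_diff[OF spd(2)] add_diff_add matrix_vector_mult_diff_distrib)
    also have "\<dots> \<le> LfB * mnorm IV (u1 - u2) + LS * mnorm IQ (eP p1 - eP p2)"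
      using mnorm_triangle[OF IV_inv] lip_fB BT by (meson add_mono order_trans)
    also have "\<dots> \<le> LfB * mnorm IV (u1 - u2) + LS * LeP * mnorm IQ (p1 - p2)"
      using mult_left_mono[OF lip_eP \<open>0 \<le> LS\<close>] by (simp add: eP_def mult.assoc)
    finally show ?thesis .
  qed
  have Gp_le: "mnorm IQ (Gp u1 p1 - Gp u2 p2) \<le> LhB * mnorm IQ (p1 - p2) + LS * LeU * mnorm IV (u1 - u2)"
    for u1 u2 p1 p2
  proof -
    have "mnorm IQ (Gp u1 p1 - Gp u2 p2) = mnorm (matrix_inv IQ) ((ghB p1 - B *v eU u1) - (ghB p2 - B *v eU u2))"
      unfolding Gp_def by (rule mnorm_uminus_matrix_inv_diff[OF spd(4)])
    also have "\<dots> = mnorm (matrix_inv IQ) ((ghB p1 - ghB p2) - B *v (eU u1 - eU u2))"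
      by (simp only: matrix_vector_mult_diff_distrib) (simp add: algebra_simps)
    also have "\<dots> \<le> LhB * mnorm IQ (p1 - p2) + LS * mnorm IV (eU u1 - eU u2)"
      using mnorm_triangle_diff[OF IQ_inv] lip_hB BB by (meson add_mono order_trans)
    also have "\<dots> \<le> LhB * mnorm IQ (p1 - p2) + LS * LeU * mnorm IV (u1 - u2)"
      using mult_left_mono[OF lip_eU \<open>0 \<le> LS\<close>] by (simp add: eU_def mult.assoc)
    finally show ?thesis .
  qed
  show ?thesis
    using Gu_le Gp_le by (simp add: Let_def Gu_def Gp_def eU_def eP_def)
qed

end
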